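(* Let $\sigma$ be a $2\times 2$ Hermitian matrix of the form $\sigma=n_x\sigma_x+n_y\sigma_y+n_z\sigma_z$ with $(n_x,n_y,n_z)\in\mathbb{R}^3$ a unit vector (so $\sigma^2=I$ and $\mathrm{Tr}\,\sigma=0$), acting on a qubit system $C$. Consider the tripartite graph state $|h_3\rangle=CZ_{(a,b)}CZ_{(a,c)}|+\rangle^{\otimes 3}$ on qubits $a$ (controller Alice), $b$ (Bob), $c$ (Charlie), after Charlie applies $U_{c,C}=|0\rangle\langle0|_c\otimes I_C+|1\rangle\langle1|_c\otimes\sigma$, giving the hybrid object $$S=\tfrac12|+\rangle_a\big(|00\rangle_{bc}\otimes I_C+|11\rangle_{bc}\otimes\sigma\big)+\tfrac12|-\rangle_a\big(|10\rangle_{bc}\otimes I_C+|01\rangle_{bc}\otimes\sigma\big).$$ Without Alice's participation, Bob and Charlie choose orthonormal bases $\{|\beta_1\rangle,|\beta_2\rangle\}$ and $\{|\gamma_1\rangle,|\gamma_2\rangle\}$ of $\mathbb{C}^2$ and measure qubits $b$ and $c$ in them. For outcome $(j,k)$, set $c_{st}=\langle\beta_j|s\rangle\langle\gamma_k|t\rangle$ ($s,t\in\{0,1\}$); the residual object is $$T_{jk}=\tfrac12|+\rangle_a\otimes(c_{00}I_C+c_{11}\sigma)+\tfrac12|-\rangle_a\otimes(c_{10}I_C+c_{01}\sigma),$$ and each outcome $(j,k)$ occurs with probability $p(j,k)=\frac14\sum_{s,t}|c_{st}|^2=\frac14$. Say outcome $(j,k)$ realizes $e^{i\alpha\sigma}$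 if $T_{jk}=|\chi\rangle_a\otimes\lambda\, e^{i\alpha\sigma}$ for some nonzero vector $|\chi\rangle\in\mathbb{C}^2$ and nonzero scalar $\lambda\in\mathbb{C}$; the success rate for $\alpha$ (for a given choice of bases) is the total probability of outcomes that realize $e^{i\alpha\sigma}$. Then, for $\alpha\in[0,2\pi)$, the remote operation $e^{i\alpha\sigma}$ can be realized probabilistically in this way, with success rate (maximized over the choice of bases) equal to $50\%$ for $\alpha\in\{0,\frac{\pi}{4},\frac{\pi}{2},\frac{3\pi}{4},\pi,\frac{5\pi}{4},\frac{3\pi}{2},\frac{7\pi}{4}\}$, and equal to $25\%$ for $\alpha\in\bigcup_{m=0}^{7}\big(\frac{m\pi}{4},\frac{(m+1)\pi}{4}\big)$.
   Context: $|\pm\rangle=(|0\rangle\pm|1\rangle)/\sqrt2$; $\sigma_x,\sigma_y,\sigma_z$ are the Pauli matrices; $CZ_{(a,b)}$ is the controlled-$Z$ gate $\mathrm{diag}(1,1,1,-1)$ on qubits $a,b$. Note $e^{i\alpha\sigma}=\cos\alpha\, I+i\sin\alpha\,\sigma$, so $e^{i\alpha\sigma}$ and $e^{i(\alpha+\pi)\sigma}$ are proportional. In the paper's protocol, with Alice's cooperation (an $X$-basis measurement of qubit $a$ plus classical communication) the operation $e^{i\alpha\sigma}$ on an unknown state of $C$ can be implemented deterministically; this proposition quantifies what Bob and Charlie alone can achieve by local rank-one projective measurements on $b$ and $c$ that disentangle qubit $a$. *)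

theory Defs
  imports "HOL-Analysis.Analysis"
begin

text \<open>Qubit vectors are complex^2 (indices 0,1 of the numeral type 2 = computational basis);
  2x2 operators on system C are complex^2^2 (row index first).\<close>

type_synonym qvec = "complex^2"
type_synonym qmat = "complex^2^2"

definition smat :: "complex \<Rightarrow> qmat \<Rightarrow> qmat" where
  "smat c M = (\<chi> i j. c * M $ i $ j)"

definition Id2 :: qmat where
  "Id2 = (\<chi> i j. if i = j then 1 else 0)"

definition pauli_x :: qmat where
  "pauli_x = (\<chi> i j. if i \<noteq> j then 1 else 0)"

definition pauli_y :: qmat where
  "pauli_y = (\<chi> i j. if i = 0 \<and> j = 1 then - \<i> else if i = 1 \<and> j = 0 then \<i> else 0)"

definition pauli_z :: qmat where
  "pauli_z = (\<chi> i j. if i = j then (if i = 0 then 1 else -1) else 0)"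

definition nsigma :: "real \<Rightarrow> real \<Rightarrow> real \<Rightarrow> qmat" where
  "nsigma nx ny nz = smat (complex_of_real nx) pauli_x + smat (complex_of_real ny) pauli_y
                      + smat (complex_of_real nz) pauli_z"

text \<open>e^{i alpha sigma} = cos alpha I + i sin alpha sigma  (valid since sigma^2 = I)\<close>
definition expsig :: "real \<Rightarrow> qmat \<Rightarrow> qmat" where
  "expsig \<alpha> \<sigma> = smat (complex_of_real (cos \<alpha>)) Id2 + smat (\<i> * complex_of_real (sin \<alpha>)) \<sigma>"

definition ket_plus :: qvec where
  "ket_plus = (\<chi> a. complex_of_real (1 / sqrt 2))"

definition ket_minus :: qvec where
  "ket_minus = (\<chi> a. if a = 0 then complex_of_real (1 / sqrt 2) else - complex_of_real (1 / sqrt 2))"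

text \<open>|chi>_a \<otimes> M, as a function of the computational index of qubit a\<close>
definition tens :: "qvec \<Rightarrow> qmat \<Rightarrow> qmat^2" where
  "tens v M = (\<chi> a. smat (v $ a) M)"

definition hybridS :: "qmat \<Rightarrow> 2 \<Rightarrow> 2 \<Rightarrow> 2 \<Rightarrow> qmat" where
  "hybridS \<sigma> a b c =
     smat (ket_plus $ a / 2)
       (if b = 0 \<and> c = 0 then Id2 else if b = 1 \<and> c = 1 then \<sigma> else 0)
   + smat (ket_minus $ a / 2)
       (if b = 1 \<and> c = 0 then Id2 else if b = 0 \<and> c = 1 then \<sigma> else 0)"

definition onb :: "(2 \<Rightarrow> qvec) \<Rightarrow> bool" where
  "onb \<beta> \<longleftrightarrow> (\<forall>j k. (\<Sum>s\<in>UNIV. cnj (\<beta> j $ s) * \<beta> k $ s) = (if j = k then 1 else 0))"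

definition coef :: "(2 \<Rightarrow> qvec) \<Rightarrow> (2 \<Rightarrow> qvec) \<Rightarrow> 2 \<Rightarrow> 2 \<Rightarrow> 2 \<Rightarrow> 2 \<Rightarrow> complex" where
  "coef \<beta> \<gamma> j k s t = cnj (\<beta> j $ s) * cnj (\<gamma> k $ t)"

text \<open>Residual object T_jk = <beta_j|_b <gamma_k|_c S\<close>
definition residual :: "qmat \<Rightarrow> (2 \<Rightarrow> qvec) \<Rightarrow> (2 \<Rightarrow> qvec) \<Rightarrow> 2 \<Rightarrow> 2 \<Rightarrow> qmat^2" where
  "residual \<sigma> \<beta> \<gamma> j k = (\<chi> a. \<Sum>s\<in>UNIV. \<Sum>t\<in>UNIV. smat (coef \<beta> \<gamma> j k s t) (hybridS \<sigma> a s t))"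

definition outcome_prob :: "(2 \<Rightarrow> qvec) \<Rightarrow> (2 \<Rightarrow> qvec) \<Rightarrow> 2 \<Rightarrow> 2 \<Rightarrow> real" where
  "outcome_prob \<beta> \<gamma> j k = (1/4) * (\<Sum>s\<in>UNIV. \<Sum>t\<in>UNIV. (cmod (coef \<beta> \<gamma> j k s t))^2)"

definition realizes :: "qmat \<Rightarrow> real \<Rightarrow> qmat^2 \<Rightarrow> bool" where
  "realizes \<sigma> \<alpha> T \<longleftrightarrow> (\<exists>v c. v \<noteq> 0 \<and> c \<noteq> 0 \<and> T = tens v (smat c (expsig \<alpha> \<sigma>)))"

definition success_rate :: "qmat \<Rightarrow> real \<Rightarrow> (2 \<Rightarrow> qvec) \<Rightarrow> (2 \<Rightarrow> qvec) \<Rightarrow> real" where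
  "success_rate \<sigma> \<alpha> \<beta> \<gamma> =
     (\<Sum>jk\<in>{jk :: 2 \<times> 2. realizes \<sigma> \<alpha> (residual \<sigma> \<beta> \<gamma> (fst jk) (snd jk))}.
        outcome_prob \<beta> \<gamma> (fst jk) (snd jk))"

definition max_success_rate :: "qmat \<Rightarrow> real \<Rightarrow> real \<Rightarrow> bool" where
  "max_success_rate \<sigma> \<alpha> r \<longleftrightarrow>
     (\<exists>\<beta> \<gamma>. onb \<beta> \<and> onb \<gamma> \<and> success_rate \<sigma> \<alpha> \<beta> \<gamma> = r) \<and>
     (\<forall>\<beta> \<gamma>. onb \<beta> \<and> onb \<gamma> \<longrightarrow> success_rate \<sigma> \<alpha> \<beta> \<gamma> \<le> r)"

end

(* After Bob and Charlie project onto beta_j and gamma_k, the part of the residual object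
   belonging to the state |a> of Alice's qubit is <beta_j|h_a>/2 * (g0 I + s_a g1 sigma), where
   (h_0, h_1) = (|+>, |->), s_a = +-1 and g = conj gamma_k.  As I and sigma are linearly
   independent, the outcome realizes e^(i alpha sigma) iff for each a either <beta_j|h_a> = 0 or
   g0 I + s_a g1 sigma is a multiple of cos alpha I + i sin alpha sigma, i.e. gamma_k is orthogonal
   to w_a = (i sin alpha, -s_a cos alpha).  All outcomes have probability 1/4, so the success rate
   is a quarter of the number of such pairs (j, k).

   A nonzero vector is orthogonal to at most one vector of an orthonormal basis of C^2.  Hence each
   j admits at most one k, so at most two outcomes succeed.  If sin 4 alpha <> 0, then w_0 and w_1
   are independent and no orthonormal basis has one vector orthogonal to w_0 and another orthogonal
   to w_1; this leaves at most one successful outcome.  Bob measuring in the Hadamard basis and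
   Charlie in the columns of e^(i alpha sigma_x) attains these bounds, with two successful outcomes
   exactly when sin 4 alpha = 0, i.e. when alpha is a multiple of pi/4. *)

theory Submission
  imports Defs
begin

section \<open>Orthonormal bases of \<open>\<complex>\<^sup>2\<close>\<close>

lemma UNIV_2_eq: "(UNIV :: 2 set) = {0, 1}"
  using UNIV_2 by auto

lemma two_cases: "(a::2) = 0 \<or> a = 1"
  using UNIV_2_eq by auto

lemma sum_UNIV_2: "sum f (UNIV :: 2 set) = f 0 + f 1"
  by (simp add: UNIV_2_eq)

lemma all_2: "(\<forall>a::2. P a) \<longleftrightarrow> P 0 \<and> P 1"
  by (metis UNIV_2_eq UNIV_I insertE singletonD)

definition braket :: "qvec \<Rightarrow> qvec \<Rightarrow> complex" where
  "braket v w = (\<Sum>s\<in>UNIV. cnj (v $ s) * w $ s)"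

lemma braket_eq: "braket v w = cnj (v $ 0) * w $ 0 + cnj (v $ 1) * w $ 1"
  by (simp add: braket_def sum_UNIV_2)

lemma cnj_braket: "cnj (braket v w) = braket w v"
  by (simp add: braket_eq mult.commute)

lemma braket_self: "braket v v = of_real ((cmod (v $ 0))\<^sup>2 + (cmod (v $ 1))\<^sup>2)"
  unfolding braket_eq of_real_add complex_norm_square by (simp add: mult.commute)

lemma braket_self_eq_0_iff: "braket v v = 0 \<longleftrightarrow> v = 0"
  unfolding braket_self of_real_eq_0_iff
  by (simp add: add_nonneg_eq_0_iff vec_eq_iff all_2)

lemma eq_0_if_orthogonal_to_independent:
  assumes "braket v w = 0" "braket v w' = 0" "w $ 0 * w' $ 1 \<noteq> w $ 1 * w' $ 0"
  shows "v = 0"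
proof -
  have "cnj (v $ 0) * (w $ 0 * w' $ 1 - w $ 1 * w' $ 0) = 0"
       "cnj (v $ 1) * (w $ 0 * w' $ 1 - w $ 1 * w' $ 0) = 0"
    using assms(1,2) unfolding braket_eq by algebra+
  then show ?thesis
    using assms(3) by (simp add: vec_eq_iff all_2)
qed

lemma onb_braket: "onb \<beta> \<longleftrightarrow> (\<forall>j k. braket (\<beta> j) (\<beta> k) = (if j = k then 1 else 0))"
  by (simp add: onb_def braket_def)

lemma onb_braket_self: "onb \<beta> \<Longrightarrow> braket (\<beta> j) (\<beta> j) = 1"
  by (simp add: onb_braket)

lemma onb_orthogonal: "onb \<beta> \<Longrightarrow> j \<noteq> k \<Longrightarrow> braket (\<beta> j) (\<beta> k) = 0"
  by (simp add: onb_braket)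

lemma onb_nonzero: "onb \<beta> \<Longrightarrow> \<beta> j \<noteq> 0"
  by (metis onb_braket_self braket_self_eq_0_iff zero_neq_one)

lemma onb_orthogonal_unique:
  assumes onb: "onb \<gamma>" and "w \<noteq> 0" and "braket (\<gamma> k) w = 0" "braket (\<gamma> k') w = 0"
  shows "k = k'"
proof (rule ccontr)
  assume "k \<noteq> k'"
  define g h where "g = \<gamma> k" and "h = \<gamma> k'"
  \<comment> \<open>\<open>\<langle>h|g'\<rangle>\<close> is the conjugate of \<open>det (g, h)\<close>, and \<open>det (g, g') = \<langle>g|g\<rangle> = 1\<close>\<close>
  define g' :: qvec where "g' = (\<chi> s. if s = 0 then - cnj (g $ 1) else cnj (g $ 0))"
  have "braket w g = 0" "braket w h = 0"
    using assms(3,4) cnj_braket unfolding g_def h_def by (metis complex_cnj_zero)+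
  then have "g $ 0 * h $ 1 = g $ 1 * h $ 0"
    using \<open>w \<noteq> 0\<close> eq_0_if_orthogonal_to_independent by blast
  then have "braket h g' = 0"
    unfolding braket_eq g'_def by (simp flip: complex_cnj_mult) (simp add: mult.commute)
  moreover have "braket h g = 0"
    using onb_orthogonal[OF onb] \<open>k \<noteq> k'\<close> unfolding g_def h_def by simp
  moreover have "g $ 0 * g' $ 1 - g $ 1 * g' $ 0 = braket g g"
    unfolding braket_eq g'_def by (simp add: mult.commute)
  then have "g $ 0 * g' $ 1 \<noteq> g $ 1 * g' $ 0"
    using onb_braket_self[OF onb] unfolding g_def by auto
  ultimately have "h = 0"
    using eq_0_if_orthogonal_to_independent by blast
  then show False
    using onb_nonzero[OF onb] unfolding h_def by blast
qed

section \<open>Linear combinations of \<open>I\<close> and \<open>\<sigma>\<close>\<close>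

lemma smat_component [simp]: "smat c M $ i $ j = c * M $ i $ j"
  by (simp add: smat_def)

lemma smat_smat [simp]: "smat a (smat b M) = smat (a * b) M"
  by (simp add: smat_def vec_eq_iff)

lemma smat_add_right: "smat a (M + N) = smat a M + smat a N"
  by (simp add: vec_eq_iff distrib_left)

lemma smat_eq_0_iff: "smat c M = 0 \<longleftrightarrow> c = 0 \<or> M = 0"
  by (auto simp: vec_eq_iff)

lemma smat_1 [simp]: "smat 1 M = M"
  by (simp add: vec_eq_iff)

lemma smat_0 [simp]: "smat 0 M = 0"
  by (simp add: vec_eq_iff)

lemma nsigma_component:
  "nsigma nx ny nz $ 0 $ 0 = nz"
  "nsigma nx ny nz $ 1 $ 1 = - nz"
  "nsigma nx ny nz $ 0 $ 1 = nx - \<i> * ny"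
  "nsigma nx ny nz $ 1 $ 0 = nx + \<i> * ny"
  by (simp_all add: nsigma_def pauli_x_def pauli_y_def pauli_z_def)

lemma smat_Id2_nsigma_eq_iff:
  assumes n: "nx \<noteq> 0 \<or> ny \<noteq> 0 \<or> nz \<noteq> 0"
  shows "smat a Id2 + smat b (nsigma nx ny nz) = smat c Id2 + smat d (nsigma nx ny nz)
    \<longleftrightarrow> a = c \<and> b = d"
proof
  assume eq: "smat a Id2 + smat b (nsigma nx ny nz) = smat c Id2 + smat d (nsigma nx ny nz)"
  have entry: "a * Id2 $ r $ s + b * nsigma nx ny nz $ r $ s = c * Id2 $ r $ s + d * nsigma nx ny nz $ r $ s"
    for r s using arg_cong[OF eq, of "\<lambda>M. M $ r $ s"] by simp
  have "a + b * nz = c + d * nz" "a - b * nz = c - d * nz"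
       "b * (nx - \<i> * ny) = d * (nx - \<i> * ny)" "b * (nx + \<i> * ny) = d * (nx + \<i> * ny)"
    using entry[of 0 0] entry[of 1 1] entry[of 0 1] entry[of 1 0]
    by (simp_all add: Id2_def nsigma_component)
  then have "a = c" "(b - d) * nz = 0" "(b - d) * nx = 0" "\<i> * (b - d) * ny = 0"
    by algebra+
  then show "a = c \<and> b = d"
    using n by auto
qed simp

lemma cos_sin_squared_add_complex:
  "of_real (cos x) * of_real (cos x) + of_real (sin x) * of_real (sin x) = (1 :: complex)"
  by (metis of_real_1 of_real_add of_real_mult power2_eq_square sin_cos_squared_add2)

lemma smat_expsig:
  "smat \<mu> (expsig \<alpha> \<sigma>) = smat (\<mu> * of_real (cos \<alpha>)) Id2 + smat (\<mu> * (\<i> * of_real (sin \<alpha>))) \<sigma>"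
  by (simp add: expsig_def smat_add_right)

lemma expsig_nonzero:
  assumes n: "nx \<noteq> 0 \<or> ny \<noteq> 0 \<or> nz \<noteq> 0"
  shows "expsig \<alpha> (nsigma nx ny nz) \<noteq> 0"
proof
  assume "expsig \<alpha> (nsigma nx ny nz) = 0"
  then have "smat (of_real (cos \<alpha>)) Id2 + smat (\<i> * of_real (sin \<alpha>)) (nsigma nx ny nz)
      = smat 0 Id2 + smat 0 (nsigma nx ny nz)"
    by (simp add: expsig_def)
  then have "cos \<alpha> = 0" "sin \<alpha> = 0"
    unfolding smat_Id2_nsigma_eq_iff[OF n] by simp_all
  then show False
    using sin_cos_squared_add[of \<alpha>] by simp
qed

lemma multiple_of_expsig_iff:
  assumes n: "nx \<noteq> 0 \<or> ny \<noteq> 0 \<or> nz \<noteq> 0"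
  shows "(\<exists>\<mu>. smat p Id2 + smat q (nsigma nx ny nz) = smat \<mu> (expsig \<alpha> (nsigma nx ny nz)))
    \<longleftrightarrow> \<i> * of_real (sin \<alpha>) * p - of_real (cos \<alpha>) * q = 0"
proof
  assume "\<exists>\<mu>. smat p Id2 + smat q (nsigma nx ny nz) = smat \<mu> (expsig \<alpha> (nsigma nx ny nz))"
  then obtain \<mu> :: complex where "p = \<mu> * of_real (cos \<alpha>)" "q = \<mu> * (\<i> * of_real (sin \<alpha>))"
    unfolding smat_expsig smat_Id2_nsigma_eq_iff[OF n] by blast
  then show "\<i> * of_real (sin \<alpha>) * p - of_real (cos \<alpha>) * q = 0"
    by simp
next
  assume rel: "\<i> * of_real (sin \<alpha>) * p - of_real (cos \<alpha>) * q = 0"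
  define \<mu> :: complex where "\<mu> = of_real (cos \<alpha>) * p - \<i> * of_real (sin \<alpha>) * q"
  have "p = \<mu> * of_real (cos \<alpha>)" "q = \<mu> * (\<i> * of_real (sin \<alpha>))"
    using rel cos_sin_squared_add_complex[of \<alpha>] i_squared unfolding \<mu>_def by algebra+
  then show "\<exists>\<mu>. smat p Id2 + smat q (nsigma nx ny nz) = smat \<mu> (expsig \<alpha> (nsigma nx ny nz))"
    unfolding smat_expsig by metis
qed

lemma realizes_iff:
  assumes n: "nx \<noteq> 0 \<or> ny \<noteq> 0 \<or> nz \<noteq> 0"
  shows "realizes (nsigma nx ny nz) \<alpha> T
    \<longleftrightarrow> T \<noteq> 0 \<and> (\<forall>a. \<exists>\<mu>. T $ a = smat \<mu> (expsig \<alpha> (nsigma nx ny nz)))"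
proof
  assume "realizes (nsigma nx ny nz) \<alpha> T"
  then obtain v c where "v \<noteq> 0" "c \<noteq> 0" and T: "T = tens v (smat c (expsig \<alpha> (nsigma nx ny nz)))"
    unfolding realizes_def by blast
  then obtain a where "v $ a \<noteq> 0"
    by (auto simp: vec_eq_iff)
  then have "T $ a \<noteq> 0"
    using \<open>c \<noteq> 0\<close> expsig_nonzero[OF n] by (simp add: T tens_def smat_eq_0_iff)
  then have "T \<noteq> 0"
    by (metis zero_index)
  moreover have "T $ a = smat (v $ a * c) (expsig \<alpha> (nsigma nx ny nz))" for a
    by (simp add: T tens_def)
  ultimately show "T \<noteq> 0 \<and> (\<forall>a. \<exists>\<mu>. T $ a = smat \<mu> (expsig \<alpha> (nsigma nx ny nz)))"
    by blast
next
  assume "T \<noteq> 0 \<and> (\<forall>a. \<exists>\<mu>. T $ a = smat \<mu> (expsig \<alpha> (nsigma nx ny nz)))"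
  then obtain \<mu> where "T \<noteq> 0" and T: "\<And>a. T $ a = smat (\<mu> a) (expsig \<alpha> (nsigma nx ny nz))"
    by (metis choice)
  then have "T = tens (\<chi> a. \<mu> a) (smat 1 (expsig \<alpha> (nsigma nx ny nz)))" "(\<chi> a. \<mu> a) \<noteq> 0"
    by (auto simp: vec_eq_iff tens_def)
  then show "realizes (nsigma nx ny nz) \<alpha> T"
    unfolding realizes_def using one_neq_zero by blast
qed

section \<open>Outcomes realizing \<open>e\<^sup>i\<^sup>\<alpha>\<^sup>\<sigma>\<close>\<close>

definition zsign :: "2 \<Rightarrow> complex" where
  "zsign a = (if a = 0 then 1 else -1)"

definition hadamard_basis :: "2 \<Rightarrow> qvec" where
  "hadamard_basis a = (if a = 0 then ket_plus else ket_minus)"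

lemma hadamard_basis_nonzero: "hadamard_basis a \<noteq> 0"
  by (simp add: hadamard_basis_def ket_plus_def ket_minus_def vec_eq_iff)

lemma onb_hadamard_basis: "onb hadamard_basis"
proof -
  have "complex_of_real (1 / sqrt 2) * complex_of_real (1 / sqrt 2) = 1 / 2"
    by (simp flip: of_real_mult)
  then show ?thesis
    by (simp add: onb_braket all_2 braket_eq hadamard_basis_def ket_plus_def ket_minus_def)
qed

lemma exists_braket_hadamard_basis_nonzero:
  assumes "v \<noteq> 0"
  obtains a where "braket v (hadamard_basis a) \<noteq> 0"
proof -
  have "hadamard_basis 0 $ 0 * hadamard_basis 1 $ 1 \<noteq> hadamard_basis 0 $ 1 * hadamard_basis 1 $ 0"
    by (simp add: hadamard_basis_def ket_plus_def ket_minus_def)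
  then show ?thesis
    using that assms eq_0_if_orthogonal_to_independent by blast
qed

lemma residual_eq:
  "residual \<sigma> \<beta> \<gamma> j k $ a = smat (braket (\<beta> j) (hadamard_basis a) / 2)
     (smat (cnj (\<gamma> k $ 0)) Id2 + smat (zsign a * cnj (\<gamma> k $ 1)) \<sigma>)"
  unfolding vec_eq_iff
  by (auto simp: residual_def sum_component sum_UNIV_2 hybridS_def coef_def braket_eq
      hadamard_basis_def ket_plus_def ket_minus_def zsign_def Id2_def algebra_simps)

text \<open>\<open>\<langle>\<gamma>|exp_annihilator \<alpha> a\<rangle> = 0\<close> iff \<open>cnj (\<gamma>$0) I + zsign a cnj (\<gamma>$1) \<sigma>\<close> is a
  multiple of \<open>e\<^sup>i\<^sup>\<alpha>\<^sup>\<sigma>\<close>.\<close>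

definition exp_annihilator :: "real \<Rightarrow> 2 \<Rightarrow> qvec" where
  "exp_annihilator \<alpha> a = (\<chi> t. if t = 0 then \<i> * of_real (sin \<alpha>) else - zsign a * of_real (cos \<alpha>))"

lemma residual_component_multiple_iff:
  assumes n: "nx \<noteq> 0 \<or> ny \<noteq> 0 \<or> nz \<noteq> 0"
  shows "(\<exists>\<mu>. residual (nsigma nx ny nz) \<beta> \<gamma> j k $ a = smat \<mu> (expsig \<alpha> (nsigma nx ny nz)))
    \<longleftrightarrow> braket (\<beta> j) (hadamard_basis a) * braket (\<gamma> k) (exp_annihilator \<alpha> a) = 0"
proof (cases "braket (\<beta> j) (hadamard_basis a) = 0")
  case True
  then show ?thesis
    by (metis residual_eq div_0 mult_zero_left smat_0)
next
  case False
  define x where "x = braket (\<beta> j) (hadamard_basis a)"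
  define L where "L = smat (cnj (\<gamma> k $ 0)) Id2 + smat (zsign a * cnj (\<gamma> k $ 1)) (nsigma nx ny nz)"
  have "(\<exists>\<mu>. smat (x / 2) L = smat \<mu> (expsig \<alpha> (nsigma nx ny nz)))
      \<longleftrightarrow> (\<exists>\<mu>. L = smat \<mu> (expsig \<alpha> (nsigma nx ny nz)))"
  proof
    assume "\<exists>\<mu>. smat (x / 2) L = smat \<mu> (expsig \<alpha> (nsigma nx ny nz))"
    then obtain \<mu> where "smat (x / 2) L = smat \<mu> (expsig \<alpha> (nsigma nx ny nz))" ..
    then have "smat (2 / x) (smat (x / 2) L) = smat (2 / x * \<mu>) (expsig \<alpha> (nsigma nx ny nz))"
      by simp
    then show "\<exists>\<mu>. L = smat \<mu> (expsig \<alpha> (nsigma nx ny nz))"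
      using False by (auto simp: x_def)
  qed auto
  also have "\<dots> \<longleftrightarrow> braket (\<gamma> k) (exp_annihilator \<alpha> a) = 0"
    unfolding L_def multiple_of_expsig_iff[OF n]
    by (simp add: braket_eq exp_annihilator_def algebra_simps)
  finally show ?thesis
    using False by (simp add: residual_eq x_def L_def)
qed

lemma residual_nonzero:
  assumes n: "nx \<noteq> 0 \<or> ny \<noteq> 0 \<or> nz \<noteq> 0" and "\<beta> j \<noteq> 0" "\<gamma> k \<noteq> 0"
  shows "residual (nsigma nx ny nz) \<beta> \<gamma> j k \<noteq> 0"
proof -
  obtain a where x: "braket (\<beta> j) (hadamard_basis a) \<noteq> 0"
    using exists_braket_hadamard_basis_nonzero[OF \<open>\<beta> j \<noteq> 0\<close>] .
  have "smat (cnj (\<gamma> k $ 0)) Id2 + smat (zsign a * cnj (\<gamma> k $ 1)) (nsigma nx ny nz) \<noteq> 0"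
  proof
    assume "smat (cnj (\<gamma> k $ 0)) Id2 + smat (zsign a * cnj (\<gamma> k $ 1)) (nsigma nx ny nz) = 0"
    then have "cnj (\<gamma> k $ 0) = 0" "zsign a * cnj (\<gamma> k $ 1) = 0"
      using smat_Id2_nsigma_eq_iff[OF n, of _ _ 0 0] by simp_all
    then have "\<gamma> k = 0"
      by (simp add: vec_eq_iff all_2 zsign_def split: if_splits)
    then show False
      using \<open>\<gamma> k \<noteq> 0\<close> by contradiction
  qed
  then have "residual (nsigma nx ny nz) \<beta> \<gamma> j k $ a \<noteq> 0"
    using x by (simp add: residual_eq smat_eq_0_iff)
  then show ?thesis
    by (metis zero_index)
qed

definition realizing_outcomes :: "real \<Rightarrow> (2 \<Rightarrow> qvec) \<Rightarrow> (2 \<Rightarrow> qvec) \<Rightarrow> (2 \<times> 2) set" where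
  "realizing_outcomes \<alpha> \<beta> \<gamma> =
     {(j, k). \<forall>a. braket (\<beta> j) (hadamard_basis a) * braket (\<gamma> k) (exp_annihilator \<alpha> a) = 0}"

lemma realizes_residual_iff:
  assumes n: "nx \<noteq> 0 \<or> ny \<noteq> 0 \<or> nz \<noteq> 0" and "onb \<beta>" "onb \<gamma>"
  shows "realizes (nsigma nx ny nz) \<alpha> (residual (nsigma nx ny nz) \<beta> \<gamma> j k)
    \<longleftrightarrow> (j, k) \<in> realizing_outcomes \<alpha> \<beta> \<gamma>"
  using residual_nonzero[OF n] onb_nonzero[OF \<open>onb \<beta>\<close>] onb_nonzero[OF \<open>onb \<gamma>\<close>]
  by (simp add: realizes_iff[OF n] residual_component_multiple_iff[OF n] realizing_outcomes_def)

lemma outcome_prob_onb: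
  assumes "onb \<beta>" "onb \<gamma>"
  shows "outcome_prob \<beta> \<gamma> j k = 1 / 4"
proof -
  have "(cmod (\<delta> i $ 0))\<^sup>2 + (cmod (\<delta> i $ 1))\<^sup>2 = 1" if "onb \<delta>" for \<delta> i
    by (metis onb_braket_self[OF that] braket_self of_real_eq_1_iff)
  then have "((cmod (\<beta> j $ 0))\<^sup>2 + (cmod (\<beta> j $ 1))\<^sup>2) * ((cmod (\<gamma> k $ 0))\<^sup>2 + (cmod (\<gamma> k $ 1))\<^sup>2) = 1"
    using assms by simp
  then show ?thesis
    by (simp add: outcome_prob_def sum_UNIV_2 coef_def norm_mult power_mult_distrib algebra_simps)
qed

lemma success_rate_eq_card:
  assumes n: "nx \<noteq> 0 \<or> ny \<noteq> 0 \<or> nz \<noteq> 0" and "onb \<beta>" "onb \<gamma>"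
  shows "success_rate (nsigma nx ny nz) \<alpha> \<beta> \<gamma> = card (realizing_outcomes \<alpha> \<beta> \<gamma>) / 4"
proof -
  have "{jk. realizes (nsigma nx ny nz) \<alpha> (residual (nsigma nx ny nz) \<beta> \<gamma> (fst jk) (snd jk))}
      = realizing_outcomes \<alpha> \<beta> \<gamma>"
    using realizes_residual_iff[OF assms] by auto
  then show ?thesis
    by (simp add: success_rate_def outcome_prob_onb[OF assms(2,3)])
qed

section \<open>Upper bounds on the number of realizing outcomes\<close>

lemma sin_four_times: "sin (4 * x :: real) = 4 * sin x * cos x * ((cos x)\<^sup>2 - (sin x)\<^sup>2)"
proof -
  have "sin (4 * x) = 2 * sin (2 * x) * cos (2 * x)"
    using sin_double[of "2 * x"] by simp
  then show ?thesis
    by (simp add: sin_double cos_double)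
qed

lemma exp_annihilator_nonzero: "exp_annihilator \<alpha> a \<noteq> 0"
proof
  assume "exp_annihilator \<alpha> a = 0"
  then have "sin \<alpha> = 0" "cos \<alpha> = 0"
    by (auto simp: vec_eq_iff exp_annihilator_def zsign_def all_2 split: if_splits)
  then show False
    using sin_cos_squared_add[of \<alpha>] by simp
qed

lemma exists_braket_exp_annihilator_nonzero:
  assumes "sin (4 * \<alpha>) \<noteq> 0" and "v \<noteq> 0"
  obtains a where "braket v (exp_annihilator \<alpha> a) \<noteq> 0"
proof -
  have "exp_annihilator \<alpha> 0 $ 0 * exp_annihilator \<alpha> 1 $ 1 - exp_annihilator \<alpha> 0 $ 1 * exp_annihilator \<alpha> 1 $ 0
      = 2 * \<i> * sin \<alpha> * cos \<alpha>"
    by (simp add: exp_annihilator_def zsign_def)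
  moreover have "sin \<alpha> \<noteq> 0" "cos \<alpha> \<noteq> 0"
    using assms(1) by (auto simp: sin_four_times)
  ultimately have "exp_annihilator \<alpha> 0 $ 0 * exp_annihilator \<alpha> 1 $ 1
      \<noteq> exp_annihilator \<alpha> 0 $ 1 * exp_annihilator \<alpha> 1 $ 0"
    by auto
  then show ?thesis
    using that assms(2) eq_0_if_orthogonal_to_independent by blast
qed

lemma onb_orthogonal_exp_annihilators_same_index:
  assumes onb: "onb \<gamma>" and generic: "sin (4 * \<alpha>) \<noteq> 0"
    and "braket (\<gamma> k) (exp_annihilator \<alpha> a) = 0" "braket (\<gamma> k') (exp_annihilator \<alpha> a') = 0"
  shows "a = a'"
proof -
  have opposite: False
    if "braket (\<gamma> k) (exp_annihilator \<alpha> 0) = 0" "braket (\<gamma> k') (exp_annihilator \<alpha> 1) = 0" for k k'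
  proof (cases "k = k'")
    case True
    obtain a where "braket (\<gamma> k) (exp_annihilator \<alpha> a) \<noteq> 0"
      using exists_braket_exp_annihilator_nonzero[OF generic onb_nonzero[OF onb]] .
    then show False
      using two_cases[of a] that True by auto
  next
    case False
    define g h S C where "g = \<gamma> k" and "h = \<gamma> k'"
      and "S = complex_of_real (sin \<alpha>)" and "C = complex_of_real (cos \<alpha>)"
    have "cnj (g $ 0) * (\<i> * S) - cnj (g $ 1) * C = 0"
      using that(1) by (simp add: g_def S_def C_def braket_eq exp_annihilator_def zsign_def)
    then have "cnj (cnj (g $ 0) * (\<i> * S) - cnj (g $ 1) * C) = 0"
      by simp
    then have "g $ 0 * (- \<i> * S) - g $ 1 * C = 0"
      by (simp add: S_def C_def)
    then have g: "\<i> * S * g $ 0 + C * g $ 1 = 0"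
      by algebra
    have h: "cnj (h $ 0) * (\<i> * S) + cnj (h $ 1) * C = 0"
      using that(2) by (simp add: h_def S_def C_def braket_eq exp_annihilator_def zsign_def)
    have "cnj (h $ 0) * g $ 0 + cnj (h $ 1) * g $ 1 = 0"
      using onb_orthogonal[OF onb] False by (simp add: g_def h_def braket_eq)
    then have "(C * C - S * S) * (g $ 0 * cnj (h $ 0)) = 0"
      using g h i_squared by algebra
    moreover have "C * C \<noteq> S * S" "C \<noteq> 0"
      using generic unfolding sin_four_times S_def C_def
      by (auto simp flip: of_real_mult simp: power2_eq_square)
    ultimately have "g $ 0 = 0 \<or> h $ 0 = 0"
      by simp
    then have "g = 0 \<or> h = 0"
      using g h \<open>C \<noteq> 0\<close> by (auto simp: vec_eq_iff all_2)
    then show False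
      using onb_nonzero[OF onb] by (auto simp: g_def h_def)
  qed
  show "a = a'"
    using two_cases[of a] two_cases[of a'] opposite assms(3,4) by metis
qed

lemma card_realizing_outcomes_le_2:
  assumes "onb \<beta>" "onb \<gamma>"
  shows "card (realizing_outcomes \<alpha> \<beta> \<gamma>) \<le> 2"
proof -
  have "k = k'" if "(j, k) \<in> realizing_outcomes \<alpha> \<beta> \<gamma>" "(j, k') \<in> realizing_outcomes \<alpha> \<beta> \<gamma>" for j k k'
  proof -
    obtain a where "braket (\<beta> j) (hadamard_basis a) \<noteq> 0"
      using exists_braket_hadamard_basis_nonzero[OF onb_nonzero[OF \<open>onb \<beta>\<close>]] .
    then have "braket (\<gamma> k) (exp_annihilator \<alpha> a) = 0" "braket (\<gamma> k') (exp_annihilator \<alpha> a) = 0"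
      using that by (auto simp: realizing_outcomes_def)
    then show "k = k'"
      using onb_orthogonal_unique[OF \<open>onb \<gamma>\<close> exp_annihilator_nonzero] by blast
  qed
  then have "inj_on fst (realizing_outcomes \<alpha> \<beta> \<gamma>)"
    by (auto intro: inj_onI)
  then have "card (realizing_outcomes \<alpha> \<beta> \<gamma>) = card (fst ` realizing_outcomes \<alpha> \<beta> \<gamma>)"
    by (simp add: card_image)
  also have "\<dots> \<le> card (UNIV :: 2 set)"
    by (rule card_mono) auto
  finally show ?thesis
    by simp
qed

lemma card_realizing_outcomes_le_1:
  assumes "onb \<beta>" "onb \<gamma>" and generic: "sin (4 * \<alpha>) \<noteq> 0"
  shows "card (realizing_outcomes \<alpha> \<beta> \<gamma>) \<le> 1"
proof -
  let ?R = "realizing_outcomes \<alpha> \<beta> \<gamma>"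
  have "(j, k) = (j', k')" if "(j, k) \<in> ?R" "(j', k') \<in> ?R" for j k j' k'
  proof -
    obtain a where x: "braket (\<beta> j) (hadamard_basis a) \<noteq> 0"
      using exists_braket_hadamard_basis_nonzero[OF onb_nonzero[OF \<open>onb \<beta>\<close>]] .
    obtain a' where x': "braket (\<beta> j') (hadamard_basis a') \<noteq> 0"
      using exists_braket_hadamard_basis_nonzero[OF onb_nonzero[OF \<open>onb \<beta>\<close>]] .
    have y: "braket (\<gamma> k) (exp_annihilator \<alpha> a) = 0" "braket (\<gamma> k') (exp_annihilator \<alpha> a') = 0"
      using that x x' by (auto simp: realizing_outcomes_def)
    then have "a = a'"
      using onb_orthogonal_exp_annihilators_same_index[OF \<open>onb \<gamma>\<close> generic] by blast
    then have "k = k'"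
      using y onb_orthogonal_unique[OF \<open>onb \<gamma>\<close> exp_annihilator_nonzero] by blast
    obtain b where "braket (\<gamma> k) (exp_annihilator \<alpha> b) \<noteq> 0"
      using exists_braket_exp_annihilator_nonzero[OF generic onb_nonzero[OF \<open>onb \<gamma>\<close>]] .
    then have "braket (\<beta> j) (hadamard_basis b) = 0" "braket (\<beta> j') (hadamard_basis b) = 0"
      using that \<open>k = k'\<close> by (auto simp: realizing_outcomes_def)
    then have "j = j'"
      using onb_orthogonal_unique[OF \<open>onb \<beta>\<close> hadamard_basis_nonzero] by blast
    with \<open>k = k'\<close> show ?thesis
      by simp
  qed
  then show ?thesis
    by (auto simp: card_le_Suc0_iff_eq)
qed

section \<open>Optimal measurements\<close>

definition rotated_basis :: "real \<Rightarrow> 2 \<Rightarrow> qvec" where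
  "rotated_basis \<alpha> k = column k (expsig \<alpha> pauli_x)"

lemma onb_rotated_basis: "onb (rotated_basis \<alpha>)"
  using cos_sin_squared_add_complex[of \<alpha>]
  by (simp add: onb_braket all_2 braket_eq rotated_basis_def column_def expsig_def Id2_def
      pauli_x_def algebra_simps)

lemma realizing_outcomes_hadamard_basis:
  "realizing_outcomes \<alpha> hadamard_basis \<gamma> = {(j, k). braket (\<gamma> k) (exp_annihilator \<alpha> j) = 0}"
  using onb_hadamard_basis by (auto simp: realizing_outcomes_def onb_braket)

lemma braket_rotated_basis_exp_annihilator:
  "braket (rotated_basis \<alpha> 0) (exp_annihilator \<alpha> 1) = 0"
  "braket (rotated_basis \<alpha> 0) (exp_annihilator \<alpha> 0) * braket (rotated_basis \<alpha> 1) (exp_annihilator \<alpha> 0)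
     = - \<i> / 2 * sin (4 * \<alpha>)"
  unfolding sin_four_times
  by (simp_all add: braket_eq rotated_basis_def column_def expsig_def Id2_def pauli_x_def
      exp_annihilator_def zsign_def algebra_simps power2_eq_square)

lemma realizing_outcomes_rotated_witness:
  "(1, 0) \<in> realizing_outcomes \<alpha> hadamard_basis (rotated_basis \<alpha>)"
  "sin (4 * \<alpha>) = 0 \<Longrightarrow> \<exists>k. (0, k) \<in> realizing_outcomes \<alpha> hadamard_basis (rotated_basis \<alpha>)"
proof -
  show "(1, 0) \<in> realizing_outcomes \<alpha> hadamard_basis (rotated_basis \<alpha>)"
    using braket_rotated_basis_exp_annihilator(1) by (simp add: realizing_outcomes_hadamard_basis)
  assume "sin (4 * \<alpha>) = 0"
  then have "braket (rotated_basis \<alpha> 0) (exp_annihilator \<alpha> 0) = 0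
      \<or> braket (rotated_basis \<alpha> 1) (exp_annihilator \<alpha> 0) = 0"
    using braket_rotated_basis_exp_annihilator(2)[of \<alpha>] by simp
  then show "\<exists>k. (0, k) \<in> realizing_outcomes \<alpha> hadamard_basis (rotated_basis \<alpha>)"
    by (auto simp: realizing_outcomes_hadamard_basis)
qed

lemma card_realizing_outcomes_rotated_witness:
  "1 \<le> card (realizing_outcomes \<alpha> hadamard_basis (rotated_basis \<alpha>))"
  "sin (4 * \<alpha>) = 0 \<Longrightarrow> 2 \<le> card (realizing_outcomes \<alpha> hadamard_basis (rotated_basis \<alpha>))"
proof -
  let ?R = "realizing_outcomes \<alpha> hadamard_basis (rotated_basis \<alpha>)"
  show "1 \<le> card ?R"
    using realizing_outcomes_rotated_witness(1) card_0_eq[of ?R] by fastforce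
  assume "sin (4 * \<alpha>) = 0"
  then obtain k where "(0, k) \<in> ?R"
    using realizing_outcomes_rotated_witness(2) by blast
  then have "{(1, 0), (0, k)} \<subseteq> ?R"
    using realizing_outcomes_rotated_witness(1) by blast
  then have "card {(1, 0), (0 :: 2, k)} \<le> card ?R"
    by (rule card_mono[rotated]) simp
  then show "2 \<le> card ?R"
    by simp
qed

lemma max_success_rate_if_card:
  assumes n: "nx \<noteq> 0 \<or> ny \<noteq> 0 \<or> nz \<noteq> 0"
    and witness: "card (realizing_outcomes \<alpha> hadamard_basis (rotated_basis \<alpha>)) = N"
    and bound: "\<And>\<beta> \<gamma>. onb \<beta> \<Longrightarrow> onb \<gamma> \<Longrightarrow> card (realizing_outcomes \<alpha> \<beta> \<gamma>) \<le> N"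
    and r: "r = real N / 4"
  shows "max_success_rate (nsigma nx ny nz) \<alpha> r"
  unfolding max_success_rate_def
proof (intro conjI exI allI impI)
  show "onb hadamard_basis" "onb (rotated_basis \<alpha>)"
    by (fact onb_hadamard_basis onb_rotated_basis)+
  show "success_rate (nsigma nx ny nz) \<alpha> hadamard_basis (rotated_basis \<alpha>) = r"
    by (simp add: success_rate_eq_card[OF n onb_hadamard_basis onb_rotated_basis] witness r)
  fix \<beta> \<gamma>
  assume "onb \<beta> \<and> onb \<gamma>"
  then show "success_rate (nsigma nx ny nz) \<alpha> \<beta> \<gamma> \<le> r"
    using bound[of \<beta> \<gamma>] by (simp add: success_rate_eq_card[OF n] r)
qed

lemma sin_four_times_nonzero:
  assumes "real m * pi / 4 < \<alpha>" "\<alpha> < real (m + 1) * pi / 4"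
  shows "sin (4 * \<alpha>) \<noteq> 0"
proof
  assume "sin (4 * \<alpha>) = 0"
  then obtain i :: int where i: "4 * \<alpha> = of_int i * pi"
    using sin_zero_iff_int2 by blast
  have "real m * pi < of_int i * pi" "of_int i * pi < real (m + 1) * pi"
    using assms unfolding i[symmetric] by linarith+
  then have "real m < of_int i" "of_int i < real m + 1"
    by (simp_all add: mult_less_cancel_right)
  then have "int m < i" "i < int m + 1"
    by linarith+
  then show False
    by simp
qed

theorem proposition2:
  fixes nx ny nz \<alpha> :: real
  assumes "nx\<^sup>2 + ny\<^sup>2 + nz\<^sup>2 = 1"
    and "0 \<le> \<alpha>" and "\<alpha> < 2 * pi"
  shows "((\<exists>m::nat. m \<le> 7 \<and> \<alpha> = real m * pi / 4)
            \<longrightarrow> max_success_rate (nsigma nx ny nz) \<alpha> (1/2))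
       \<and> ((\<exists>m::nat. m \<le> 7 \<and> real m * pi / 4 < \<alpha> \<and> \<alpha> < real (m + 1) * pi / 4)
            \<longrightarrow> max_success_rate (nsigma nx ny nz) \<alpha> (1/4))"
proof -
  \<comment> \<open>Only whether \<open>sin (4 * \<alpha>)\<close> vanishes matters.\<close>
  have n: "nx \<noteq> 0 \<or> ny \<noteq> 0 \<or> nz \<noteq> 0"
    using assms(1) by auto
  let ?R = "realizing_outcomes \<alpha> hadamard_basis (rotated_basis \<alpha>)"
  have witness_bound: "card ?R \<le> 2" "sin (4 * \<alpha>) \<noteq> 0 \<Longrightarrow> card ?R \<le> 1"
    using card_realizing_outcomes_le_2 card_realizing_outcomes_le_1
      onb_hadamard_basis onb_rotated_basis by blast+
  show ?thesis
  proof (intro conjI impI)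
    assume "\<exists>m::nat. m \<le> 7 \<and> \<alpha> = real m * pi / 4"
    then obtain m :: nat where m: "\<alpha> = real m * pi / 4"
      by blast
    have "sin (4 * \<alpha>) = 0"
      unfolding m by simp
    then have "card ?R = 2"
      using card_realizing_outcomes_rotated_witness(2) witness_bound(1) by (meson le_antisym)
    then show "max_success_rate (nsigma nx ny nz) \<alpha> (1/2)"
      using max_success_rate_if_card[OF n _ card_realizing_outcomes_le_2] by simp
  next
    assume "\<exists>m::nat. m \<le> 7 \<and> real m * pi / 4 < \<alpha> \<and> \<alpha> < real (m + 1) * pi / 4"
    then have generic: "sin (4 * \<alpha>) \<noteq> 0"
      using sin_four_times_nonzero by blast
    then have "card ?R = 1"
      using card_realizing_outcomes_rotated_witness(1) witness_bound(2) by (meson le_antisym)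
    then show "max_success_rate (nsigma nx ny nz) \<alpha> (1/4)"
      using max_success_rate_if_card[OF n _ card_realizing_outcomes_le_1[OF _ _ generic]] by simp
  qed
qed

end
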